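(* Let $S$ be a surface, $\phi:S\to\mathbf{Ein}^{1,1}$ an immersion with $\phi^*\tau$ trivial, $g$ a $C^2$ Lorentz metric on $S$ compatible with the induced split structure, $\sigma$ an isotropic surface with $[\sigma]=\phi$ and $g(u,v)=\langle\mathrm D_u\sigma,\mathrm D_v\sigma\rangle$, and $\eta$ its dual isotropic surface. Let $\psi=(\frac{\sqrt2}{2}(\sigma-\eta),\frac{\sqrt2}{2}(\sigma+\eta))$ be the $g$-Epstein surface and $\pi$ the projection to the base point. Then $\pi\circ\psi=\frac{\sqrt2}{2}(\sigma-\eta)$ is an envelope of the family of horospheres $\mathcal H(g)=\{H(\sigma(s)):s\in S\}$, i.e. for every $s\in S$, $\pi\circ\psi(s)\in H(\sigma(s))$ and $\mathrm d_s(\pi\circ\psi)(\mathsf T_sS)\subset\mathsf T_{\pi\circ\psi(s)}H(\sigma(s))$.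
   Context: $W$ is a real $4$-dimensional vector space with a quadratic form of signature $(2,2)$ and polar form $\langle\cdot,\cdot\rangle$; $\mathbf H^{2,1}_+=\{x:\langle x,x\rangle=-1\}$, $\mathbf{Ein}^{1,1}=\{[x]\in\mathbf P(W):\langle x,x\rangle=0\}$ with tautological line bundle $\tau$ and canonical split structure given (via a Segre identification with $\mathbf{RP}^1\times\mathbf{RP}^1$) by the fibers of the two projections; compatible metrics have these leaves isotropic with the positivity convention on oriented split bases. An isotropic surface is an immersion $\sigma:S\to W$ with $\langle\sigma,\sigma\rangle=0$ and $\sigma(s)$ transverse to the image of $\mathsf T_s\sigma$; its dual $\eta$ satisfies $\langle\eta,\sigma\rangle=1$, $\langle\eta,\eta\rangle=0$, $\langle\eta,\mathrm D_u\sigma\rangle=0$. For a nonzero isotropic vector $x_0\in W$, the horosphere is $H(x_0)=\{p\in\mathbf H^{2,1}_+:\langle x_0,p\rangle=-\frac{\sqrt2}{2}\}$, whose tangent space at $p$ is $\operatorname{span}\{x_0,p\}^\perp$. *)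

theory Defs
  imports "HOL-Analysis.Analysis"
begin

text \<open>Model of W: the space of real 2x2 matrices with quadratic form q(x) = - det x,
  which has signature (2,2). Its isotropic cone projectivizes to the rank-one matrices,
  and the Segre identification RP1 x RP1 -> Ein is ([a],[b]) |-> [a b^T].\<close>

type_synonym W = "real^2^2"

definition wform :: "W \<Rightarrow> W \<Rightarrow> real" where
  "wform x y = - ((x$1$1 * y$2$2 + x$2$2 * y$1$1 - x$1$2 * y$2$1 - x$2$1 * y$1$2) / 2)"

definition Hpos :: "W set" where
  "Hpos = {x. wform x x = -1}"

definition horosphere :: "W \<Rightarrow> W set" where
  "horosphere x0 = {p \<in> Hpos. wform x0 p = - (sqrt 2 / 2)}"

definition horo_tangent :: "W \<Rightarrow> W \<Rightarrow> W set" where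
  "horo_tangent x0 p = {v. \<forall>w \<in> span {x0, p}. wform v w = 0}"

definition isotropic_surface ::
  "(real^2) set \<Rightarrow> ((real^2) \<Rightarrow> W) \<Rightarrow> ((real^2) \<Rightarrow> (real^2) \<Rightarrow> W) \<Rightarrow> bool" where
  "isotropic_surface S \<sigma> D\<sigma> \<longleftrightarrow>
     (\<forall>s\<in>S. (\<sigma> has_derivative D\<sigma> s) (at s) \<and> inj (D\<sigma> s)
        \<and> wform (\<sigma> s) (\<sigma> s) = 0 \<and> \<sigma> s \<notin> range (D\<sigma> s))"

definition dual_surface ::
  "(real^2) set \<Rightarrow> ((real^2) \<Rightarrow> W) \<Rightarrow> ((real^2) \<Rightarrow> (real^2) \<Rightarrow> W) \<Rightarrow> ((real^2) \<Rightarrow> W) \<Rightarrow> bool" where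
  "dual_surface S \<sigma> D\<sigma> \<eta> \<longleftrightarrow>
     (\<forall>s\<in>S. wform (\<eta> s) (\<sigma> s) = 1 \<and> wform (\<eta> s) (\<eta> s) = 0
        \<and> (\<forall>u. wform (\<eta> s) (D\<sigma> s u) = 0))"

text \<open>Split structure induced by phi = [sigma] via the Segre identification:
  a tangent vector u is along a leaf of the first (resp. second) projection iff
  D sigma(u) = w b^T (resp. a w^T) where sigma(s) = a b^T, i.e. iff
  ker sigma(s) <= ker D sigma(u) (resp. the same for transposes).\<close>
definition leaf1_dir :: "W \<Rightarrow> W \<Rightarrow> bool" where
  "leaf1_dir M V \<longleftrightarrow> (\<forall>x. M *v x = 0 \<longrightarrow> V *v x = 0)"

definition leaf2_dir :: "W \<Rightarrow> W \<Rightarrow> bool" where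
  "leaf2_dir M V \<longleftrightarrow> (\<forall>x. transpose M *v x = 0 \<longrightarrow> transpose V *v x = 0)"

definition lorentz_form :: "((real^2) \<Rightarrow> (real^2) \<Rightarrow> real) \<Rightarrow> bool" where
  "lorentz_form B \<longleftrightarrow> bilinear B \<and> (\<forall>u v. B u v = B v u)
      \<and> (\<exists>u. B u u > 0) \<and> (\<exists>v. B v v < 0)"

definition compatible_metric ::
  "(real^2) set \<Rightarrow> ((real^2) \<Rightarrow> W) \<Rightarrow> ((real^2) \<Rightarrow> (real^2) \<Rightarrow> W)
    \<Rightarrow> ((real^2) \<Rightarrow> (real^2) \<Rightarrow> (real^2) \<Rightarrow> real) \<Rightarrow> bool" where
  "compatible_metric S \<sigma> D\<sigma> g \<longleftrightarrow>
     (\<forall>s\<in>S. lorentz_form (g s)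
        \<and> (\<forall>u. leaf1_dir (\<sigma> s) (D\<sigma> s u) \<longrightarrow> g s u u = 0)
        \<and> (\<forall>u. leaf2_dir (\<sigma> s) (D\<sigma> s u) \<longrightarrow> g s u u = 0))"

definition epstein :: "((real^2) \<Rightarrow> W) \<Rightarrow> ((real^2) \<Rightarrow> W) \<Rightarrow> (real^2) \<Rightarrow> W \<times> W" where
  "epstein \<sigma> \<eta> s = ((sqrt 2 / 2) *\<^sub>R (\<sigma> s - \<eta> s), (sqrt 2 / 2) *\<^sub>R (\<sigma> s + \<eta> s))"

end

theory Submission
  imports Defs
begin

text \<open>Differentiating the frame relations \<open>\<langle>\<sigma>,\<sigma>\<rangle> = 0\<close>, \<open>\<langle>\<eta>,\<eta>\<rangle> = 0\<close>,
  \<open>\<langle>\<eta>,\<sigma>\<rangle> = 1\<close> and using \<open>\<langle>\<eta>, D\<sigma>\<rangle> = 0\<close> shows that both \<open>D\<sigma>\<close> and \<open>D\<eta>\<close> are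
  orthogonal to \<open>\<sigma>\<close> and to \<open>\<eta>\<close>. Hence \<open>p = (\<sigma> - \<eta>)/\<surd>2\<close>, which satisfies
  \<open>\<langle>p,p\<rangle> = -1\<close> and \<open>\<langle>\<sigma>,p\<rangle> = -1/\<surd>2\<close>, has derivative orthogonal to \<open>span {\<sigma>, p}\<close>.\<close>

lemma wform_commute: "wform x y = wform y x"
  unfolding wform_def by argo

lemma bounded_bilinear_wform: "bounded_bilinear wform"
  unfolding bilinear_conv_bounded_bilinear[symmetric] bilinear_def
  by (auto intro!: linearI simp: wform_def field_simps)

lemmas wform_linear_simps =
  bounded_bilinear.diff_left[OF bounded_bilinear_wform]
  bounded_bilinear.diff_right[OF bounded_bilinear_wform]
  bounded_bilinear.scaleR_left[OF bounded_bilinear_wform]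
  bounded_bilinear.scaleR_right[OF bounded_bilinear_wform]

lemma wform_eq_0_on_span:
  assumes "\<And>a. a \<in> A \<Longrightarrow> wform v a = 0" and "w \<in> span A"
  shows "wform v w = 0"
  using bounded_linear.linear[OF bounded_bilinear.bounded_linear_right[OF bounded_bilinear_wform]]
    assms by (rule linear_eq_0_on_span)

lemma has_derivative_locally_constant_eq_0:
  fixes f :: "'a::real_normed_vector \<Rightarrow> 'b::real_normed_vector"
  assumes "open S" "s \<in> S" "(f has_derivative f') (at s)" "\<And>x. x \<in> S \<Longrightarrow> f x = c"
  shows "f' u = 0"
proof -
  have "((\<lambda>_. c) has_derivative (\<lambda>_. 0)) (at s)"
    by simp
  then have "(f has_derivative (\<lambda>_. 0)) (at s)"
    by (rule has_derivative_transform_within_open[OF _ assms(1,2)]) (use assms(4) in auto)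
  then have "f' = (\<lambda>_. 0)"
    using assms(3) has_derivative_unique by blast
  then show ?thesis by simp
qed

lemma bounded_bilinear_derivative_of_constant:
  assumes "bounded_bilinear B" "open S" "s \<in> S"
    and "(f has_derivative f') (at s)" "(g has_derivative g') (at s)"
    and "\<And>x. x \<in> S \<Longrightarrow> B (f x) (g x) = c"
  shows "B (f s) (g' u) + B (f' u) (g s) = 0"
  using assms(2,3) bounded_bilinear.FDERIV[OF assms(1,4,5)] assms(6)
  by (rule has_derivative_locally_constant_eq_0)

lemma isotropic_derivative_orthogonal:
  assumes "open S" "s \<in> S" "(\<sigma> has_derivative D) (at s)"
    and "\<And>x. x \<in> S \<Longrightarrow> wform (\<sigma> x) (\<sigma> x) = 0"
  shows "wform (D u) (\<sigma> s) = 0"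
  using bounded_bilinear_derivative_of_constant[OF bounded_bilinear_wform assms(1-3,3,4), of u]
  by (simp add: wform_commute)

lemma dual_derivative_orthogonal:
  assumes "open S" "s \<in> S" "(\<sigma> has_derivative D\<sigma>) (at s)" "(\<eta> has_derivative D\<eta>) (at s)"
    and "\<And>x. x \<in> S \<Longrightarrow> wform (\<eta> x) (\<sigma> x) = 1" "wform (\<eta> s) (D\<sigma> u) = 0"
  shows "wform (D\<eta> u) (\<sigma> s) = 0"
  using bounded_bilinear_derivative_of_constant[OF bounded_bilinear_wform assms(1,2,4,3,5), of u] assms(6)
  by simp

lemma frame_derivatives_orthogonal:
  assumes "open S" "s \<in> S" "(\<sigma> has_derivative D\<sigma>) (at s)" "(\<eta> has_derivative D\<eta>) (at s)"
    and "\<And>x. x \<in> S \<Longrightarrow> wform (\<sigma> x) (\<sigma> x) = 0" "\<And>x. x \<in> S \<Longrightarrow> wform (\<eta> x) (\<eta> x) = 0"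
    and "\<And>x. x \<in> S \<Longrightarrow> wform (\<eta> x) (\<sigma> x) = 1" "wform (\<eta> s) (D\<sigma> u) = 0"
  shows "wform (D\<sigma> u) (\<sigma> s) = 0" "wform (D\<sigma> u) (\<eta> s) = 0"
    and "wform (D\<eta> u) (\<sigma> s) = 0" "wform (D\<eta> u) (\<eta> s) = 0"
proof -
  show "wform (D\<sigma> u) (\<sigma> s) = 0"
    by (rule isotropic_derivative_orthogonal[OF assms(1-3,5)])
  show "wform (D\<sigma> u) (\<eta> s) = 0"
    using assms(8) by (subst wform_commute)
  show "wform (D\<eta> u) (\<sigma> s) = 0"
    by (rule dual_derivative_orthogonal[OF assms(1-4,7,8)])
  show "wform (D\<eta> u) (\<eta> s) = 0"
    by (rule isotropic_derivative_orthogonal[OF assms(1,2,4,6)])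
qed

lemma scaled_difference_in_horosphere:
  assumes "wform \<sigma> \<sigma> = 0" "wform \<eta> \<eta> = 0" "wform \<eta> \<sigma> = 1"
  shows "(sqrt 2 / 2) *\<^sub>R (\<sigma> - \<eta>) \<in> horosphere \<sigma>"
proof -
  have "wform \<sigma> \<eta> = 1"
    using assms(3) by (simp add: wform_commute)
  moreover have "(sqrt 2 / 2) * (sqrt 2 / 2) = (1 / 2 :: real)"
    by simp
  ultimately show ?thesis
    using assms by (simp add: horosphere_def Hpos_def wform_linear_simps algebra_simps)
qed

lemma scaled_difference_in_horo_tangent:
  assumes "wform v \<sigma> = 0" "wform v \<eta> = 0" "wform w \<sigma> = 0" "wform w \<eta> = 0"
  shows "(sqrt 2 / 2) *\<^sub>R (v - w) \<in> horo_tangent \<sigma> ((sqrt 2 / 2) *\<^sub>R (\<sigma> - \<eta>))"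
proof -
  have "wform ((sqrt 2 / 2) *\<^sub>R (v - w)) a = 0" if "a \<in> {\<sigma>, (sqrt 2 / 2) *\<^sub>R (\<sigma> - \<eta>)}" for a
    using that assms by (auto simp: wform_linear_simps)
  then show ?thesis
    unfolding horo_tangent_def by (blast intro: wform_eq_0_on_span)
qed

theorem mainTheorem16:
  fixes S :: "(real^2) set"
    and \<sigma> \<eta> :: "real^2 \<Rightarrow> real^2^2"
    and D\<sigma> :: "real^2 \<Rightarrow> real^2 \<Rightarrow> real^2^2"
    and g :: "real^2 \<Rightarrow> real^2 \<Rightarrow> real^2 \<Rightarrow> real"
  assumes "open S"
    and "isotropic_surface S \<sigma> D\<sigma>"
    and "\<And>s u v. s \<in> S \<Longrightarrow> g s u v = wform (D\<sigma> s u) (D\<sigma> s v)"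
    and "compatible_metric S \<sigma> D\<sigma> g"
    and "dual_surface S \<sigma> D\<sigma> \<eta>"
    and "\<eta> differentiable_on S"
  shows "\<forall>s\<in>S. (fst \<circ> epstein \<sigma> \<eta>) s = (sqrt 2 / 2) *\<^sub>R (\<sigma> s - \<eta> s)
      \<and> (fst \<circ> epstein \<sigma> \<eta>) s \<in> horosphere (\<sigma> s)
      \<and> (fst \<circ> epstein \<sigma> \<eta>) differentiable (at s)
      \<and> range (frechet_derivative (fst \<circ> epstein \<sigma> \<eta>) (at s))
          \<subseteq> horo_tangent (\<sigma> s) ((fst \<circ> epstein \<sigma> \<eta>) s)"
proof
  fix s assume "s \<in> S"
  let ?D\<eta> = "frechet_derivative \<eta> (at s)"
  have proj: "fst \<circ> epstein \<sigma> \<eta> = (\<lambda>x. (sqrt 2 / 2) *\<^sub>R (\<sigma> x - \<eta> x))"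
    by (auto simp: epstein_def)
  have \<sigma>: "(\<sigma> has_derivative D\<sigma> s) (at s)" "\<And>x. x \<in> S \<Longrightarrow> wform (\<sigma> x) (\<sigma> x) = 0"
    using assms(2) \<open>s \<in> S\<close> unfolding isotropic_surface_def by auto
  have \<eta>: "\<And>x. x \<in> S \<Longrightarrow> wform (\<eta> x) (\<sigma> x) = 1" "\<And>x. x \<in> S \<Longrightarrow> wform (\<eta> x) (\<eta> x) = 0"
    "\<And>u. wform (\<eta> s) (D\<sigma> s u) = 0"
    using assms(5) \<open>s \<in> S\<close> unfolding dual_surface_def by auto
  have \<eta>_deriv: "(\<eta> has_derivative ?D\<eta>) (at s)"
    using assms(1,6) \<open>s \<in> S\<close> by (simp add: differentiable_on_eq_differentiable_at frechet_derivative_works)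
  have deriv: "(fst \<circ> epstein \<sigma> \<eta> has_derivative (\<lambda>u. (sqrt 2 / 2) *\<^sub>R (D\<sigma> s u - ?D\<eta> u))) (at s)"
    unfolding proj by (intro derivative_intros \<sigma>(1) \<eta>_deriv)
  then have fd: "frechet_derivative (fst \<circ> epstein \<sigma> \<eta>) (at s)
      = (\<lambda>u. (sqrt 2 / 2) *\<^sub>R (D\<sigma> s u - ?D\<eta> u))"
    by (rule frechet_derivative_at[symmetric])
  have tangent: "range (\<lambda>u. (sqrt 2 / 2) *\<^sub>R (D\<sigma> s u - ?D\<eta> u))
      \<subseteq> horo_tangent (\<sigma> s) ((fst \<circ> epstein \<sigma> \<eta>) s)"
    using frame_derivatives_orthogonal[OF assms(1) \<open>s \<in> S\<close> \<sigma>(1) \<eta>_deriv \<sigma>(2) \<eta>(2,1,3)]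
    by (auto simp: proj intro!: scaled_difference_in_horo_tangent)
  have "(fst \<circ> epstein \<sigma> \<eta>) s \<in> horosphere (\<sigma> s)"
    unfolding proj using \<open>s \<in> S\<close> \<sigma>(2) \<eta>(1,2) by (auto intro: scaled_difference_in_horosphere)
  with deriv tangent show "(fst \<circ> epstein \<sigma> \<eta>) s = (sqrt 2 / 2) *\<^sub>R (\<sigma> s - \<eta> s)
      \<and> (fst \<circ> epstein \<sigma> \<eta>) s \<in> horosphere (\<sigma> s)
      \<and> (fst \<circ> epstein \<sigma> \<eta>) differentiable (at s)
      \<and> range (frechet_derivative (fst \<circ> epstein \<sigma> \<eta>) (at s))
          \<subseteq> horo_tangent (\<sigma> s) ((fst \<circ> epstein \<sigma> \<eta>) s)"
    unfolding fd by (auto simp: proj differentiable_def)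
qed

end
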